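(* Let $T\in S(\lambda,\mu)$ and let $\tau$ be a row-standard filling of shape $\lambda$ and content $\mu$ with $\mathrm{st}(\tau)=T$. Then $\tau$ can be obtained from $T$ by a finite sequence of admissible transpositions, and the minimum number of admissible transpositions in such a sequence is $\mathrm{inv}(\tau)$.
   Context: A shape is a partition $\lambda=(\lambda_1\ge\dots\ge\lambda_m\ge1)$ with $\lambda_i$ left-justified boxes in row $i$ (rows top to bottom, columns left to right). A content is $\mu=(\mu_1,\dots,\mu_M)$, all $\mu_i\ge1$, $\sum\mu_i=\sum\lambda_i$; a filling of content $\mu$ uses value $v$ exactly $\mu_v$ times; row-standard means rows strictly increase left to right. $S(\lambda,\mu)$: row-standard fillings with weakly increasing columns. Inversion pairs of a row-standard $\tau$: for a box $c$ and $r\ge1$ let $c^{(r)}$ be the box $r$ positions to its right, if it exists. For distinct boxes $c,c'$ in the same column with $\tau(c)<\tau(c')$, let $r\ge1$ be least such that one of $c^{(r)},c'^{(r)}$ does not exist or both exist with $\tau(c^{(r)})\ne\tau(c'^{(r)})$. $(c,c')$ is an inversion pair if either (one does not exist and $c$ lies below $c'$) or (both exist and $\tau(c^{(r)})>\tau(c'^{(r)})$); $\mathrm{inv}(\tau)$ is the number of inversion pairs. $\mathrm{st}(\tau)$: sort each column weakly increasingly. Height order: on the boxes of each column of a row-standard $\tau$ a total order $\blacktriangleleft$ is defined, column by column from right to left: for distinct boxes $c,c'$ in column $j$, if at least one of them has no box directly to its right then $c\blacktriangleleft c'$ iff $c$ is above $c'$; if both have right neighbours $b,b'$, then $c\blacktriangleleft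 c'$ iff $\tau(b)<\tau(b')$, or $\tau(b)=\tau(b')$ and $b\blacktriangleleft b'$ (in column $j+1$). The height of a box is its rank in this order within its column. A partial row transposition at two boxes $c,c'$ of column $j$ (in rows $i_1,i_2$) with $\tau(c)<\tau(c')$ and heights differing by exactly $1$ swaps the contents of rows $i_1$ and $i_2$ in columns $1,\dots,j$ (columns $>j$ unchanged); it is admissible if $\tau(c)$ and $\tau(c')$ are both smaller than the entries directly to the right of $c$ and of $c'$ (whenever these exist), i.e. the result is again row-standard. *)

theory Defs
  imports Main
begin

text \<open>Rows and columns are 0-indexed. A filling is a function row => column => value,
  required to be 0 outside the shape. Box (i,j) exists iff i < length lam and j < lam!i.\<close>

type_synonym filling = "nat \<Rightarrow> nat \<Rightarrow> nat"

definition box :: "nat list \<Rightarrow> nat \<Rightarrow> nat \<Rightarrow> bool" where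
  "box lam i j \<longleftrightarrow> i < length lam \<and> j < lam ! i"

definition is_shape :: "nat list \<Rightarrow> bool" where
  "is_shape lam \<longleftrightarrow> sorted_wrt (\<ge>) lam \<and> (\<forall>x\<in>set lam. 1 \<le> x)"

definition is_content :: "nat list \<Rightarrow> nat list \<Rightarrow> bool" where
  "is_content lam mu \<longleftrightarrow> (\<forall>x\<in>set mu. 1 \<le> x) \<and> sum_list mu = sum_list lam"

definition is_filling :: "nat list \<Rightarrow> nat list \<Rightarrow> filling \<Rightarrow> bool" where
  "is_filling lam mu \<tau> \<longleftrightarrow>
     (\<forall>i j. \<not> box lam i j \<longrightarrow> \<tau> i j = 0) \<and>
     (\<forall>i j. box lam i j \<longrightarrow> 1 \<le> \<tau> i j \<and> \<tau> i j \<le> length mu) \<and>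
     (\<forall>v\<in>{1..length mu}. card {(i, j). box lam i j \<and> \<tau> i j = v} = mu ! (v - 1))"

definition row_standard :: "nat list \<Rightarrow> filling \<Rightarrow> bool" where
  "row_standard lam \<tau> \<longleftrightarrow> (\<forall>i j. box lam i (Suc j) \<longrightarrow> \<tau> i j < \<tau> i (Suc j))"

definition col_weak :: "nat list \<Rightarrow> filling \<Rightarrow> bool" where
  "col_weak lam \<tau> \<longleftrightarrow> (\<forall>i j. box lam (Suc i) j \<longrightarrow> \<tau> i j \<le> \<tau> (Suc i) j)"

definition S_set :: "nat list \<Rightarrow> nat list \<Rightarrow> filling set" where
  "S_set lam mu = {T. is_filling lam mu T \<and> row_standard lam T \<and> col_weak lam T}"

definition st :: "nat list \<Rightarrow> filling \<Rightarrow> filling" where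
  "st lam \<tau> = (\<lambda>i j. if box lam i j
      then sort (map (\<lambda>k. \<tau> k j) (filter (\<lambda>k. j < lam ! k) [0..<length lam])) ! i
      else 0)"

definition inv_stop :: "nat list \<Rightarrow> filling \<Rightarrow> nat \<Rightarrow> nat \<Rightarrow> nat \<Rightarrow> nat \<Rightarrow> bool" where
  "inv_stop lam \<tau> i i' j r \<longleftrightarrow>
     \<not> box lam i (j + r) \<or> \<not> box lam i' (j + r) \<or> \<tau> i (j + r) \<noteq> \<tau> i' (j + r)"

definition inv_pair :: "nat list \<Rightarrow> filling \<Rightarrow> nat \<Rightarrow> nat \<Rightarrow> nat \<Rightarrow> bool" where
  "inv_pair lam \<tau> i i' j \<longleftrightarrow>
     box lam i j \<and> box lam i' j \<and> i \<noteq> i' \<and> \<tau> i j < \<tau> i' j \<and>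
     (let r = (LEAST r. 1 \<le> r \<and> inv_stop lam \<tau> i i' j r) in
        (if box lam i (j + r) \<and> box lam i' (j + r)
         then \<tau> i (j + r) > \<tau> i' (j + r)
         else i' < i))"

definition inv_count :: "nat list \<Rightarrow> filling \<Rightarrow> nat" where
  "inv_count lam \<tau> = card {(i, i', j). inv_pair lam \<tau> i i' j}"

text \<open>Height order: hless lam tau j i i' means (i,j) is strictly before (i',j).\<close>
function hless :: "nat list \<Rightarrow> filling \<Rightarrow> nat \<Rightarrow> nat \<Rightarrow> nat \<Rightarrow> bool" where
  "hless lam \<tau> j i i' =
     (if \<not> (box lam i (Suc j) \<and> box lam i' (Suc j)) then i < i'
      else \<tau> i (Suc j) < \<tau> i' (Suc j) \<or>
           (\<tau> i (Suc j) = \<tau> i' (Suc j) \<and> hless lam \<tau> (Suc j) i i'))"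
  by pat_completeness auto
termination
proof (relation "measure (\<lambda>(lam, \<tau>, j, i, i'). Suc (sum_list lam) - j)")
  show "wf (measure (\<lambda>(lam, \<tau>, j, i, i'). Suc (sum_list lam) - j))" by simp
next
  fix lam :: "nat list" and \<tau> :: filling and j i i'
  assume "\<not> \<not> (box lam i (Suc j) \<and> box lam i' (Suc j))"
  then have "Suc j < lam ! i" "i < length lam" by (auto simp: box_def)
  moreover have "lam ! i \<le> sum_list lam"
    using \<open>i < length lam\<close> by (simp add: member_le_sum_list)
  ultimately show "((lam, \<tau>, Suc j, i, i'), lam, \<tau>, j, i, i')
       \<in> measure (\<lambda>(lam, \<tau>, j, i, i'). Suc (sum_list lam) - j)" by simp
qed

definition height :: "nat list \<Rightarrow> filling \<Rightarrow> nat \<Rightarrow> nat \<Rightarrow> nat" where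
  "height lam \<tau> i j = card {i'. box lam i' j \<and> i' \<noteq> i \<and> hless lam \<tau> j i' i}"

definition swap_rows :: "filling \<Rightarrow> nat \<Rightarrow> nat \<Rightarrow> nat \<Rightarrow> filling" where
  "swap_rows \<tau> i1 i2 j = (\<lambda>i k.
     if k \<le> j \<and> i = i1 then \<tau> i2 k
     else if k \<le> j \<and> i = i2 then \<tau> i1 k
     else \<tau> i k)"

definition adm_step :: "nat list \<Rightarrow> filling \<Rightarrow> filling \<Rightarrow> bool" where
  "adm_step lam \<tau> \<tau>' \<longleftrightarrow> (\<exists>i1 i2 j.
     box lam i1 j \<and> box lam i2 j \<and> i1 \<noteq> i2 \<and> \<tau> i1 j < \<tau> i2 j \<and>
     \<bar>int (height lam \<tau> i1 j) - int (height lam \<tau> i2 j)\<bar> = 1 \<and>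
     (box lam i1 (Suc j) \<longrightarrow> \<tau> i1 j < \<tau> i1 (Suc j) \<and> \<tau> i2 j < \<tau> i1 (Suc j)) \<and>
     (box lam i2 (Suc j) \<longrightarrow> \<tau> i1 j < \<tau> i2 (Suc j) \<and> \<tau> i2 j < \<tau> i2 (Suc j)) \<and>
     \<tau>' = swap_rows \<tau> i1 i2 j)"

end

theory Submission
  imports Defs "HOL-Combinatorics.Permutations"
begin

text \<open>An inversion pair of a row-standard filling is a pair of boxes in one column whose
  larger entry comes first in the height order. A partial row
  transposition of two boxes of adjacent height permutes all other inversion pairs bijectively
  and affects only the pair formed by the two transposed boxes themselves, so each admissible
  transposition changes \<open>inv\<close> by exactly one. A filling with weakly increasing columns has no
  inversions, whence every sequence from \<open>T\<close> to \<open>\<tau>\<close> has length at least \<open>inv(\<tau>)\<close>.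
  Conversely, any inversion pair of \<open>\<tau>\<close> can be shrunk to one whose boxes have adjacent
  heights; undoing it is an admissible transposition that lowers \<open>inv\<close> by one and keeps
  \<open>st\<close> fixed, and a filling without inversions has sorted columns, so it equals its \<open>st\<close>.\<close>

lemma box_upward_closed:
  assumes "is_shape lam" "i \<le> i'" "box lam i' j"
  shows "box lam i j"
proof (cases "i = i'")
  case False
  with assms(2) have "i < i'" by simp
  moreover have "i' < length lam" using assms(3) by (simp add: box_def)
  ultimately have "lam ! i' \<le> lam ! i"
    using assms(1) sorted_wrt_nth_less unfolding is_shape_def by fastforce
  then show ?thesis using assms(3) \<open>i < i'\<close> by (auto simp: box_def)
qed (use assms in simp)

lemma less_if_box_not_box:
  assumes "is_shape lam" "box lam u j" "\<not> box lam w j"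
  shows "u < w"
  using box_upward_closed[OF assms(1), of w u j] assms by (cases "u < w") auto

lemma box_leftward_closed: "box lam i j' \<Longrightarrow> j \<le> j' \<Longrightarrow> box lam i j"
  by (simp add: box_def)

lemma column_less_sum_if_box: "box lam i j \<Longrightarrow> j < sum_list lam"
  using member_le_sum_list[of "lam ! i" lam] by (auto simp: box_def)

lemma finite_column: "finite {i. box lam i j \<and> P i}"
  by (rule finite_subset[of _ "{..<length lam}"]) (auto simp: box_def)

declare hless.simps[simp del]

lemma hless_asym: "hless lam \<tau> j x y \<Longrightarrow> \<not> hless lam \<tau> j y x"
  by (induction lam \<tau> j x y rule: hless.induct)
    (subst (asm) hless.simps, subst hless.simps, auto split: if_splits)

lemma hless_irrefl: "\<not> hless lam \<tau> j i i"
  using hless_asym by blast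

lemma hless_total: "x \<noteq> y \<Longrightarrow> hless lam \<tau> j x y \<or> hless lam \<tau> j y x"
  by (induction lam \<tau> j x y rule: hless.induct)
    (subst hless.simps, subst hless.simps, auto split: if_splits)

lemma hless_trans:
  "is_shape lam \<Longrightarrow> hless lam \<tau> j x y \<Longrightarrow> hless lam \<tau> j y z \<Longrightarrow> hless lam \<tau> j x z"
proof (induction lam \<tau> j x y arbitrary: z rule: hless.induct)
  case (1 lam \<tau> j x y)
  let ?B = "\<lambda>u. box lam u (Suc j)"
  show ?case
  proof (cases "?B x \<and> ?B y \<and> ?B z")
    case True
    let ?v = "\<lambda>u. \<tau> u (Suc j)"
    have "?v x < ?v y \<or> ?v x = ?v y \<and> hless lam \<tau> (Suc j) x y"
      using "1.prems"(2) True by (subst (asm) hless.simps) simp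
    moreover have "?v y < ?v z \<or> ?v y = ?v z \<and> hless lam \<tau> (Suc j) y z"
      using "1.prems"(3) True by (subst (asm) hless.simps) simp
    ultimately show ?thesis
      using True "1.IH" "1.prems"(1) by (subst hless.simps) auto
  next
    case False
    \<comment> \<open>Rows without a box in column j+1 lie below all rows that have one, so the
      comparison falls back to row order consistently.\<close>
    have below: "?B u \<Longrightarrow> \<not> ?B w \<Longrightarrow> u < w" for u w
      using less_if_box_not_box[OF "1.prems"(1)] by blast
    have row_order: "\<not> (?B u \<and> ?B w) \<Longrightarrow> hless lam \<tau> j u w \<longleftrightarrow> u < w" for u w
      by (subst hless.simps) simp
    consider "\<not> (?B x \<and> ?B y)" "\<not> (?B y \<and> ?B z)" | "?B x" "?B y" "\<not> ?B z"
      | "?B y" "?B z" "\<not> ?B x"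
      using False by blast
    then show ?thesis
    proof cases
      case 1
      then show ?thesis
        using "1.prems"(2,3) below[of z y] row_order by (cases "?B x \<and> ?B z") auto
    next
      case 2
      then show ?thesis using "1.prems"(3) below[of x z] row_order by auto
    next
      case 3
      then show ?thesis using "1.prems"(2,3) below[of y x] row_order by auto
    qed
  qed
qed

lemma hless_iff_first_difference:
  assumes "1 \<le> r" "inv_stop lam \<tau> y x j r"
    and "\<forall>r'. 1 \<le> r' \<longrightarrow> r' < r \<longrightarrow> \<not> inv_stop lam \<tau> y x j r'"
  shows "hless lam \<tau> j x y \<longleftrightarrow>
    (if box lam y (j + r) \<and> box lam x (j + r) then \<tau> x (j + r) < \<tau> y (j + r) else x < y)"
  using assms
proof (induction lam \<tau> j x y arbitrary: r rule: hless.induct)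
  case (1 lam \<tau> j x y)
  show ?case
  proof (cases "box lam x (Suc j) \<and> box lam y (Suc j) \<and> \<tau> x (Suc j) = \<tau> y (Suc j)")
    case False
    then have "inv_stop lam \<tau> y x j 1" by (auto simp: inv_stop_def)
    with "1.prems"(1,3) have "r = 1" by (metis le_neq_implies_less order_refl)
    with False show ?thesis by (subst hless.simps) auto
  next
    case True
    then have "\<not> inv_stop lam \<tau> y x j 1" by (auto simp: inv_stop_def)
    with "1.prems" obtain r' where r': "r = Suc r'" "1 \<le> r'"
      by (cases r) (auto simp: le_Suc_eq)
    have shift: "inv_stop lam \<tau> y x j (Suc q) = inv_stop lam \<tau> y x (Suc j) q" for q
      by (simp add: inv_stop_def)
    have "hless lam \<tau> (Suc j) x y \<longleftrightarrow>
      (if box lam y (Suc j + r') \<and> box lam x (Suc j + r')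
       then \<tau> x (Suc j + r') < \<tau> y (Suc j + r') else x < y)"
      using True r' "1.prems"(2,3) by (intro "1.IH") (auto simp: shift[symmetric])
    with True r' show ?thesis by (subst hless.simps) simp
  qed
qed

definition inversions :: "nat list \<Rightarrow> filling \<Rightarrow> (nat \<times> nat \<times> nat) set" where
  "inversions lam \<tau> =
     {(i, i', j). box lam i j \<and> box lam i' j \<and> \<tau> i j < \<tau> i' j \<and> hless lam \<tau> j i' i}"

lemma inv_pair_iff_hless:
  "inv_pair lam \<tau> i i' j \<longleftrightarrow>
     box lam i j \<and> box lam i' j \<and> \<tau> i j < \<tau> i' j \<and> hless lam \<tau> j i' i"
proof -
  define P where "P r \<longleftrightarrow> 1 \<le> r \<and> inv_stop lam \<tau> i i' j r" for r
  define r where "r = (LEAST r. P r)"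
  have "P (Suc (lam ! i))" by (auto simp: P_def inv_stop_def box_def)
  then have "P r" unfolding r_def by (rule LeastI)
  moreover have "\<forall>r'. 1 \<le> r' \<longrightarrow> r' < r \<longrightarrow> \<not> inv_stop lam \<tau> i i' j r'"
    using not_less_Least[of _ P] unfolding r_def P_def by blast
  ultimately have "hless lam \<tau> j i' i \<longleftrightarrow>
    (if box lam i (j + r) \<and> box lam i' (j + r) then \<tau> i' (j + r) < \<tau> i (j + r) else i' < i)"
    unfolding P_def by (intro hless_iff_first_difference) auto
  then show ?thesis
    unfolding inv_pair_def Let_def P_def[symmetric] r_def[symmetric] by auto
qed

lemma inv_count_eq_card_inversions: "inv_count lam \<tau> = card (inversions lam \<tau>)"
  unfolding inv_count_def inversions_def
  by (rule arg_cong[where f = card]) (auto simp: inv_pair_iff_hless)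

lemma finite_inversions: "finite (inversions lam \<tau>)"
proof (rule finite_subset)
  show "inversions lam \<tau> \<subseteq> {..<length lam} \<times> {..<length lam} \<times> {..<sum_list lam}"
    using column_less_sum_if_box by (fastforce simp: inversions_def box_def)
qed auto

lemma hless_cong_right:
  assumes "\<forall>i k. j < k \<longrightarrow> \<sigma> i k = \<tau> i k"
  shows "hless lam \<sigma> j x y = hless lam \<tau> j x y"
  using assms
proof (induction lam \<tau> j x y rule: hless.induct)
  case (1 lam \<tau> j x y)
  then show ?case by (subst (1 2) hless.simps) auto
qed

lemma height_cong_right:
  "\<forall>i k. j < k \<longrightarrow> \<sigma> i k = \<tau> i k \<Longrightarrow> height lam \<sigma> x j = height lam \<tau> x j"
  unfolding height_def using hless_cong_right[of j \<sigma> \<tau> lam] by simp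

lemma height_less:
  assumes "is_shape lam" "box lam y j" "hless lam \<tau> j y x"
  shows "height lam \<tau> y j < height lam \<tau> x j"
proof -
  let ?below = "\<lambda>x. {i. box lam i j \<and> i \<noteq> x \<and> hless lam \<tau> j i x}"
  have "?below y \<subseteq> ?below x"
    using hless_trans[OF assms(1) _ assms(3)] hless_irrefl by blast
  moreover have "y \<in> ?below x - ?below y"
    using assms(2,3) hless_irrefl by auto
  ultimately have "?below y \<subset> ?below x" by blast
  then show ?thesis unfolding height_def by (intro psubset_card_mono finite_column)
qed

lemma height_Suc_if_nothing_between:
  assumes "is_shape lam" "box lam y j" "hless lam \<tau> j y x"
    and "\<forall>c. box lam c j \<longrightarrow> \<not> (hless lam \<tau> j y c \<and> hless lam \<tau> j c x)"
  shows "height lam \<tau> x j = Suc (height lam \<tau> y j)"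
proof -
  let ?below = "\<lambda>x. {i. box lam i j \<and> i \<noteq> x \<and> hless lam \<tau> j i x}"
  have "?below x = insert y (?below y)"
  proof (intro equalityI subsetI)
    fix c assume "c \<in> ?below x"
    then show "c \<in> insert y (?below y)" using assms(4) hless_total[of c y] by auto
  next
    fix c assume "c \<in> insert y (?below y)"
    then show "c \<in> ?below x"
      using assms(2,3) hless_trans[OF assms(1) _ assms(3)] hless_irrefl by blast
  qed
  moreover have "y \<notin> ?below y" by simp
  ultimately show ?thesis unfolding height_def by (simp add: finite_column)
qed

definition hless_adjacent :: "nat list \<Rightarrow> filling \<Rightarrow> nat \<Rightarrow> nat \<Rightarrow> nat \<Rightarrow> bool" where
  "hless_adjacent lam \<tau> j a b \<longleftrightarrow>
     (\<forall>c. box lam c j \<longrightarrow> c \<noteq> a \<longrightarrow> c \<noteq> b \<longrightarrow> (hless lam \<tau> j c a \<longleftrightarrow> hless lam \<tau> j c b))"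

lemma hless_adjacentD:
  assumes "hless_adjacent lam \<tau> j a b" "box lam c j" "c \<noteq> a" "c \<noteq> b"
  shows "hless lam \<tau> j c a \<longleftrightarrow> hless lam \<tau> j c b" "hless lam \<tau> j a c \<longleftrightarrow> hless lam \<tau> j b c"
proof -
  have "hless lam \<tau> j u c \<longleftrightarrow> \<not> hless lam \<tau> j c u" if "c \<noteq> u" for u
    using that hless_total hless_asym by blast
  with assms show "hless lam \<tau> j c a \<longleftrightarrow> hless lam \<tau> j c b" "hless lam \<tau> j a c \<longleftrightarrow> hless lam \<tau> j b c"
    unfolding hless_adjacent_def by simp_all
qed

lemma hless_adjacent_if_heights_adjacent:
  assumes "is_shape lam" "box lam a j" "box lam b j" "a \<noteq> b"
    and "\<bar>int (height lam \<tau> a j) - int (height lam \<tau> b j)\<bar> = 1"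
  shows "hless_adjacent lam \<tau> j a b"
proof -
  have between: "hless lam \<tau> j c x \<longleftrightarrow> hless lam \<tau> j c y"
    if "box lam x j" "box lam y j" "box lam c j" "hless lam \<tau> j x y" "c \<noteq> x"
      "\<bar>int (height lam \<tau> x j) - int (height lam \<tau> y j)\<bar> = 1" for x y c
  proof
    assume "hless lam \<tau> j c y"
    show "hless lam \<tau> j c x"
    proof (rule ccontr)
      assume "\<not> hless lam \<tau> j c x"
      then have "hless lam \<tau> j x c" using hless_total that(5) by blast
      then have "height lam \<tau> x j < height lam \<tau> c j" "height lam \<tau> c j < height lam \<tau> y j"
        using height_less[OF assms(1)] that \<open>hless lam \<tau> j c y\<close> by auto
      with that(6) show False by linarith
    qed
  qed (use hless_trans[OF assms(1)] that in blast)
  consider "hless lam \<tau> j a b" | "hless lam \<tau> j b a"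
    using hless_total assms(4) by blast
  then show ?thesis
  proof cases
    case 1
    then show ?thesis unfolding hless_adjacent_def using between[of a b] assms by blast
  next
    case 2
    then show ?thesis unfolding hless_adjacent_def using between[of b a] assms
      by (simp add: abs_minus_commute)
  qed
qed

lemma hless_transpose_if_adjacent:
  assumes "hless_adjacent lam \<tau> j a b" "box lam x j" "box lam y j" "{x, y} \<noteq> {a, b}"
  shows "hless lam \<tau> j (transpose a b x) (transpose a b y) \<longleftrightarrow> hless lam \<tau> j x y"
proof -
  consider "x = y" | "x \<notin> {a, b}" "y \<notin> {a, b}" | "x \<in> {a, b}" "y \<notin> {a, b}"
    | "x \<notin> {a, b}" "y \<in> {a, b}"
    using assms(4) by (auto simp: doubleton_eq_iff)
  then show ?thesis
  proof cases
    case 3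
    then show ?thesis using hless_adjacentD(2)[OF assms(1,3)] by auto
  next
    case 4
    then show ?thesis using hless_adjacentD(1)[OF assms(1,2)] by auto
  qed (simp_all add: hless_irrefl)
qed

lemma swap_rows_le: "k \<le> j \<Longrightarrow> swap_rows \<tau> a b j i k = \<tau> (transpose a b i) k"
  by (simp add: swap_rows_def transpose_def)

lemma swap_rows_gt: "j < k \<Longrightarrow> swap_rows \<tau> a b j i k = \<tau> i k"
  by (simp add: swap_rows_def)

lemma swap_rows_swap_rows [simp]: "swap_rows (swap_rows \<tau> a b j) a b j = \<tau>"
  by (auto simp: swap_rows_def fun_eq_iff)

lemma box_transpose: "box lam a k \<Longrightarrow> box lam b k \<Longrightarrow> box lam (transpose a b x) k = box lam x k"
  by (simp add: transpose_def)

lemma transpose_less_transpose_iff: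
  assumes "is_shape lam" "box lam a m" "box lam b m" "\<not> (box lam x m \<and> box lam y m)"
  shows "transpose a b x < transpose a b y \<longleftrightarrow> x < y"
proof -
  have "a < w \<and> b < w" if "\<not> box lam w m" for w
    using that assms(2,3) less_if_box_not_box[OF assms(1)] by blast
  from this[of x] this[of y] assms(2-4) show ?thesis by (auto simp: transpose_def)
qed

lemma hless_swap_rows_step:
  assumes "is_shape lam" "box lam a j" "box lam b j" "k < j"
    and "\<And>x y. box lam x (Suc k) \<Longrightarrow> box lam y (Suc k) \<Longrightarrow>
      \<tau> (transpose a b x) (Suc k) = \<tau> (transpose a b y) (Suc k) \<Longrightarrow>
      hless lam (swap_rows \<tau> a b j) (Suc k) x y =
      hless lam \<tau> (Suc k) (transpose a b x) (transpose a b y)"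
  shows "hless lam (swap_rows \<tau> a b j) k x y =
    hless lam \<tau> k (transpose a b x) (transpose a b y)"
proof -
  have "box lam a (Suc k)" "box lam b (Suc k)"
    using assms(2-4) box_leftward_closed by auto
  then have boxes: "box lam (transpose a b z) (Suc k) = box lam z (Suc k)" for z
    by (rule box_transpose)
  have entries: "swap_rows \<tau> a b j z (Suc k) = \<tau> (transpose a b z) (Suc k)" for z
    using assms(4) by (simp add: swap_rows_le)
  show ?thesis
  proof (cases "box lam x (Suc k) \<and> box lam y (Suc k)")
    case False
    then show ?thesis
      using transpose_less_transpose_iff[OF assms(1) \<open>box lam a (Suc k)\<close> \<open>box lam b (Suc k)\<close>] boxes
      by (subst (1 2) hless.simps) auto
  next
    case True
    let ?\<sigma> = "swap_rows \<tau> a b j" and ?x = "transpose a b x" and ?y = "transpose a b y"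
    have "hless lam ?\<sigma> k x y \<longleftrightarrow> \<tau> ?x (Suc k) < \<tau> ?y (Suc k) \<or>
        (\<tau> ?x (Suc k) = \<tau> ?y (Suc k) \<and> hless lam ?\<sigma> (Suc k) x y)"
      using True by (subst hless.simps) (simp add: entries)
    moreover have "hless lam \<tau> k ?x ?y \<longleftrightarrow> \<tau> ?x (Suc k) < \<tau> ?y (Suc k) \<or>
        (\<tau> ?x (Suc k) = \<tau> ?y (Suc k) \<and> hless lam \<tau> (Suc k) ?x ?y)"
      using True by (subst hless.simps) (simp add: boxes)
    ultimately show ?thesis using True assms(5) by auto
  qed
qed

lemma hless_swap_rows:
  assumes "is_shape lam" "box lam a j" "box lam b j" "\<tau> a j \<noteq> \<tau> b j"
    and "hless_adjacent lam \<tau> j a b" "k < j"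
  shows "hless lam (swap_rows \<tau> a b j) k x y = hless lam \<tau> k (transpose a b x) (transpose a b y)"
proof -
  have "k \<le> j - 1" using assms(6) by simp
  then show ?thesis
  proof (induction k arbitrary: x y rule: inc_induct)
    case base
    have "Suc (j - 1) = j" using assms(6) by simp
    show ?case
    proof (rule hless_swap_rows_step[OF assms(1-3)])
      fix x y
      assume "box lam x (Suc (j - 1))" "box lam y (Suc (j - 1))"
        and "\<tau> (transpose a b x) (Suc (j - 1)) = \<tau> (transpose a b y) (Suc (j - 1))"
      then have "box lam x j" "box lam y j" "{x, y} \<noteq> {a, b}"
        using assms(4) \<open>Suc (j - 1) = j\<close> by (auto simp: doubleton_eq_iff)
      then show "hless lam (swap_rows \<tau> a b j) (Suc (j - 1)) x y =
        hless lam \<tau> (Suc (j - 1)) (transpose a b x) (transpose a b y)"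
        using \<open>Suc (j - 1) = j\<close> hless_cong_right[of j "swap_rows \<tau> a b j" \<tau>]
          hless_transpose_if_adjacent[OF assms(5)] by (simp add: swap_rows_gt)
    qed (use assms(6) in simp)
  next
    case (step k)
    show ?case
      by (rule hless_swap_rows_step[OF assms(1-3)]) (use step in simp_all)
  qed
qed

definition swap_rows_index :: "nat \<Rightarrow> nat \<Rightarrow> nat \<Rightarrow> nat \<times> nat \<times> nat \<Rightarrow> nat \<times> nat \<times> nat" where
  "swap_rows_index a b j =
     (\<lambda>(i, i', k). if k \<le> j then (transpose a b i, transpose a b i', k) else (i, i', k))"

lemma swap_rows_index_involutory [simp]:
  "swap_rows_index a b j (swap_rows_index a b j t) = t"
  by (cases t) (simp add: swap_rows_index_def)

lemma swap_rows_index_mem_inversions_iff: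
  assumes "is_shape lam" "box lam a j" "box lam b j" "\<tau> a j \<noteq> \<tau> b j"
    and "hless_adjacent lam \<tau> j a b"
  defines "P \<equiv> {(a, b, j), (b, a, j)}"
  shows "t \<in> inversions lam (swap_rows \<tau> a b j) - P \<longleftrightarrow>
    swap_rows_index a b j t \<in> inversions lam \<tau> - P"
proof -
  obtain i i' k where t: "t = (i, i', k)" by (cases t)
  let ?\<sigma> = "swap_rows \<tau> a b j"
  consider "k < j" | "k = j" | "j < k" by linarith
  then show ?thesis
  proof cases
    case 1
    have "box lam a k" "box lam b k" using assms(2,3) 1 box_leftward_closed by auto
    then have "box lam (transpose a b z) k = box lam z k" for z by (rule box_transpose)
    moreover have "swap_rows_index a b j t = (transpose a b i, transpose a b i', k)"
      using 1 t by (simp add: swap_rows_index_def)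
    moreover have "t \<notin> P" "(transpose a b i, transpose a b i', k) \<notin> P"
      using 1 t by (auto simp: P_def)
    ultimately show ?thesis
      using 1 t hless_swap_rows[OF assms(1-5) 1, of i' i]
        swap_rows_le[of k j \<tau> a b i] swap_rows_le[of k j \<tau> a b i']
      unfolding inversions_def by auto
  next
    case 2
    have "hless lam ?\<sigma> j x y = hless lam \<tau> j x y" for x y
      using hless_cong_right[of j ?\<sigma> \<tau>] by (simp add: swap_rows_gt)
    moreover have "hless lam \<tau> j (transpose a b i') (transpose a b i) \<longleftrightarrow> hless lam \<tau> j i' i"
      if "box lam i j" "box lam i' j" "(i, i', j) \<notin> P"
      using that hless_transpose_if_adjacent[OF assms(5)] by (auto simp: P_def doubleton_eq_iff)
    moreover have "(transpose a b i, transpose a b i', j) \<in> P \<longleftrightarrow> (i, i', j) \<in> P"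
      by (auto simp: P_def transpose_def)
    ultimately show ?thesis
      using 2 t box_transpose[OF assms(2,3)]
      by (auto simp: inversions_def swap_rows_index_def swap_rows_le)
  next
    case 3
    have "hless lam ?\<sigma> k x y = hless lam \<tau> k x y" for x y
      using hless_cong_right[of k ?\<sigma> \<tau>] 3 by (simp add: swap_rows_gt)
    then show ?thesis
      using 3 t by (auto simp: inversions_def swap_rows_index_def swap_rows_gt P_def)
  qed
qed

lemma card_inversions_swap_rows:
  assumes "is_shape lam" "box lam a j" "box lam b j" "a \<noteq> b" "\<tau> a j < \<tau> b j"
    and "\<bar>int (height lam \<tau> a j) - int (height lam \<tau> b j)\<bar> = 1"
  shows "if hless lam \<tau> j a b
    then card (inversions lam (swap_rows \<tau> a b j)) = Suc (card (inversions lam \<tau>))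
    else Suc (card (inversions lam (swap_rows \<tau> a b j))) = card (inversions lam \<tau>)"
proof -
  let ?\<sigma> = "swap_rows \<tau> a b j" and ?P = "{(a, b, j), (b, a, j)}"
  have adjacent: "hless_adjacent lam \<tau> j a b"
    using hless_adjacent_if_heights_adjacent[OF assms(1-4,6)] .
  let ?f = "swap_rows_index a b j"
  have mem_iff: "t \<in> inversions lam ?\<sigma> - ?P \<longleftrightarrow> ?f t \<in> inversions lam \<tau> - ?P" for t
    by (rule swap_rows_index_mem_inversions_iff[OF assms(1-3) _ adjacent]) (use assms(5) in simp)
  have "bij_betw ?f (inversions lam ?\<sigma> - ?P) (inversions lam \<tau> - ?P)"
  proof (rule bij_betw_byWitness[where f' = ?f])
    show "?f ` (inversions lam ?\<sigma> - ?P) \<subseteq> inversions lam \<tau> - ?P"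
      unfolding image_subset_iff by (intro ballI) (rule mem_iff[THEN iffD1])
    show "?f ` (inversions lam \<tau> - ?P) \<subseteq> inversions lam ?\<sigma> - ?P"
      unfolding image_subset_iff by (intro ballI) (subst mem_iff, simp)
  qed simp_all
  then have outside: "card (inversions lam ?\<sigma> - ?P) = card (inversions lam \<tau> - ?P)"
    by (rule bij_betw_same_card)
  have "hless lam ?\<sigma> j = hless lam \<tau> j"
    using hless_cong_right[of j ?\<sigma> \<tau>] by (simp add: swap_rows_gt fun_eq_iff)
  moreover have "?\<sigma> a j = \<tau> b j" "?\<sigma> b j = \<tau> a j"
    by (simp_all add: swap_rows_le)
  ultimately have "(b, a, j) \<in> inversions lam ?\<sigma> \<longleftrightarrow> hless lam \<tau> j a b"
    "(a, b, j) \<notin> inversions lam ?\<sigma>"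
    "(a, b, j) \<in> inversions lam \<tau> \<longleftrightarrow> hless lam \<tau> j b a"
    "(b, a, j) \<notin> inversions lam \<tau>"
    using assms(2,3,5) by (auto simp: inversions_def)
  then have
    "inversions lam ?\<sigma> \<inter> ?P = (if hless lam \<tau> j a b then {(b, a, j)} else {})"
    "inversions lam \<tau> \<inter> ?P = (if hless lam \<tau> j a b then {} else {(a, b, j)})"
    using hless_total[OF assms(4), of lam \<tau> j] hless_asym[of lam \<tau> j a b] by auto
  with outside show ?thesis
    using card_Int_Diff[OF finite_inversions, of lam ?\<sigma> ?P]
      card_Int_Diff[OF finite_inversions, of lam \<tau> ?P]
    by simp
qed

lemma card_inversions_swap_rows_descent:
  assumes "is_shape lam" "box lam a k" "box lam b k" "hless lam \<tau> k a b"
    and "height lam \<tau> b k = Suc (height lam \<tau> a k)" "\<tau> b k < \<tau> a k"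
  shows "card (inversions lam \<tau>) = Suc (card (inversions lam (swap_rows \<tau> a b k)))"
proof -
  define \<sigma> where "\<sigma> = swap_rows \<tau> a b k"
  have \<tau>: "\<tau> = swap_rows \<sigma> a b k" by (simp add: \<sigma>_def)
  have right: "\<forall>i j. k < j \<longrightarrow> \<sigma> i j = \<tau> i j" by (simp add: \<sigma>_def swap_rows_gt)
  have "a \<noteq> b" using assms(4) hless_irrefl by metis
  from card_inversions_swap_rows[OF assms(1-3) this, of \<sigma>] show ?thesis
    using assms(4-6) hless_cong_right[OF right] height_cong_right[OF right]
    by (simp add: \<sigma>_def swap_rows_le flip: \<tau>)
qed

lemma card_inversions_adm_step:
  assumes "is_shape lam" "adm_step lam \<tau> \<sigma>"
  shows "card (inversions lam \<sigma>) \<le> Suc (card (inversions lam \<tau>))"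
proof -
  obtain a b j where "box lam a j" "box lam b j" "a \<noteq> b" "\<tau> a j < \<tau> b j"
    and "\<bar>int (height lam \<tau> a j) - int (height lam \<tau> b j)\<bar> = 1"
    and \<sigma>: "\<sigma> = swap_rows \<tau> a b j"
    using assms(2) unfolding adm_step_def by blast
  from card_inversions_swap_rows[OF assms(1) this(1-5)] show ?thesis
    unfolding \<sigma> by (cases "hless lam \<tau> j a b") simp_all
qed

lemma card_inversions_relpowp_adm_step:
  assumes "is_shape lam" "(adm_step lam ^^ n) \<tau> \<sigma>"
  shows "card (inversions lam \<sigma>) \<le> card (inversions lam \<tau>) + n"
  using assms(2)
proof (induction n arbitrary: \<sigma>)
  case (Suc n)
  then obtain \<rho> where "(adm_step lam ^^ n) \<tau> \<rho>" "adm_step lam \<rho> \<sigma>"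
    by (blast elim: relpowp_Suc_E)
  with Suc.IH card_inversions_adm_step[OF assms(1)] show ?case by fastforce
qed simp

definition column_sorted :: "nat list \<Rightarrow> filling \<Rightarrow> nat \<Rightarrow> bool" where
  "column_sorted lam \<tau> j \<longleftrightarrow> (\<forall>i i'. i < i' \<longrightarrow> box lam i' j \<longrightarrow> \<tau> i j \<le> \<tau> i' j)"

lemma column_sorted_if_col_weak:
  assumes "is_shape lam" "col_weak lam T"
  shows "column_sorted lam T j"
proof -
  have "T i j \<le> T i' j" if "i \<le> i'" "box lam i' j" for i i'
    using that
  proof (induction i' rule: dec_induct)
    case (step n)
    then have "T i j \<le> T n j" using box_upward_closed[OF assms(1), of n "Suc n" j] by simp
    also have "\<dots> \<le> T (Suc n) j" using assms(2) step.prems by (simp add: col_weak_def)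
    finally show ?case .
  qed simp
  then show ?thesis unfolding column_sorted_def by simp
qed

lemma hless_if_columns_sorted_right:
  "\<forall>k > j. column_sorted lam \<tau> k \<Longrightarrow> i < i' \<Longrightarrow> hless lam \<tau> j i i'"
proof (induction lam \<tau> j i i' rule: hless.induct)
  case (1 lam \<tau> j i i')
  then show ?case by (subst hless.simps) (auto simp: column_sorted_def le_less)
qed

lemma inversions_empty_iff_column_sorted:
  assumes "is_shape lam"
  shows "inversions lam \<tau> = {} \<longleftrightarrow> (\<forall>j. column_sorted lam \<tau> j)"
proof
  assume empty: "inversions lam \<tau> = {}"
  show "\<forall>j. column_sorted lam \<tau> j"
  proof
    fix j show "column_sorted lam \<tau> j"
    proof (induction "sum_list lam - j" arbitrary: j rule: less_induct)
      case less
      have "column_sorted lam \<tau> k" if "j < k" for k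
      proof (cases "k < sum_list lam")
        case True
        with that show ?thesis by (intro less) simp
      next
        case False
        then show ?thesis
          using column_less_sum_if_box[of lam _ k] unfolding column_sorted_def by blast
      qed
      then have hless_row_order: "hless lam \<tau> j i i'" if "i < i'" for i i'
        using that hless_if_columns_sorted_right by blast
      show ?case
        unfolding column_sorted_def
      proof (intro allI impI)
        fix i i' assume "i < i'" "box lam i' j"
        moreover from this have "box lam i j" using box_upward_closed[OF assms, of i i' j] by simp
        ultimately have "(i', i, j) \<notin> inversions lam \<tau>" "hless lam \<tau> j i i'"
          using empty hless_row_order by simp_all
        with \<open>box lam i j\<close> \<open>box lam i' j\<close> show "\<tau> i j \<le> \<tau> i' j"
          by (simp add: inversions_def)
      qed
    qed
  qed
next
  assume sorted: "\<forall>j. column_sorted lam \<tau> j"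
  show "inversions lam \<tau> = {}"
  proof (rule ccontr)
    assume "inversions lam \<tau> \<noteq> {}"
    then obtain i i' j where "box lam i j" "\<tau> i j < \<tau> i' j" "hless lam \<tau> j i' i"
      by (auto simp: inversions_def)
    moreover have "i < i' \<Longrightarrow> hless lam \<tau> j i i'"
      using sorted by (intro hless_if_columns_sorted_right) simp_all
    moreover have "\<not> i' < i"
    proof
      assume "i' < i"
      then have "\<tau> i' j \<le> \<tau> i j"
        using sorted \<open>box lam i j\<close> unfolding column_sorted_def by blast
      with \<open>\<tau> i j < \<tau> i' j\<close> show False by simp
    qed
    ultimately show False using hless_asym hless_irrefl by (metis linorder_neqE_nat)
  qed
qed

lemma filter_upt_eq_upt_if_downward_closed:
  assumes "\<And>k k'. k \<le> k' \<Longrightarrow> k' < n \<Longrightarrow> P k' \<Longrightarrow> P k"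
  shows "\<exists>m. filter P [0..<n] = [0..<m]"
  using assms
proof (induction n)
  case (Suc n)
  show ?case
  proof (cases "P n")
    case True
    then have "filter P [0..<n] = [0..<n]"
      using Suc.prems[of _ n] by (simp add: filter_id_conv)
    with True show ?thesis by (intro exI[of _ "Suc n"]) simp
  next
    case False
    with Suc show ?thesis by simp
  qed
qed (intro exI[of _ 0], simp)

lemma column_rows:
  assumes "is_shape lam"
  obtains m where "filter (\<lambda>k. j < lam ! k) [0..<length lam] = [0..<m]"
    and "\<And>k. box lam k j \<longleftrightarrow> k < m"
proof -
  obtain m where m: "filter (\<lambda>k. j < lam ! k) [0..<length lam] = [0..<m]"
    using filter_upt_eq_upt_if_downward_closed[of "length lam" "\<lambda>k. j < lam ! k"]
      box_upward_closed[OF assms] by (auto simp: box_def)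
  moreover have "box lam k j \<longleftrightarrow> k \<in> set (filter (\<lambda>k. j < lam ! k) [0..<length lam])" for k
    by (auto simp: box_def)
  ultimately show thesis using that by simp
qed

definition vanishes_outside :: "nat list \<Rightarrow> filling \<Rightarrow> bool" where
  "vanishes_outside lam \<tau> \<longleftrightarrow> (\<forall>i j. \<not> box lam i j \<longrightarrow> \<tau> i j = 0)"

lemma st_eq_self_if_column_sorted:
  assumes "is_shape lam" "vanishes_outside lam \<tau>" "\<forall>j. column_sorted lam \<tau> j"
  shows "st lam \<tau> = \<tau>"
proof (intro ext)
  fix i j
  obtain m where m: "filter (\<lambda>k. j < lam ! k) [0..<length lam] = [0..<m]"
    and box_iff: "\<And>k. box lam k j \<longleftrightarrow> k < m"
    using column_rows[OF assms(1), where j = j] by blast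
  have "sorted (map (\<lambda>k. \<tau> k j) [0..<m])"
    using assms(3) box_iff unfolding sorted_iff_nth_mono_less column_sorted_def by auto
  then show "st lam \<tau> i j = \<tau> i j"
    using assms(2) m box_iff unfolding st_def vanishes_outside_def by (simp add: sorted_sort_id)
qed

lemma st_swap_rows:
  assumes "is_shape lam" "box lam a k" "box lam b k"
  shows "st lam (swap_rows \<tau> a b k) = st lam \<tau>"
proof (intro ext)
  fix i j
  obtain m where m: "filter (\<lambda>k. j < lam ! k) [0..<length lam] = [0..<m]"
    and box_iff: "\<And>r. box lam r j \<longleftrightarrow> r < m"
    using column_rows[OF assms(1), where j = j] by blast
  have "mset (map (\<lambda>r. swap_rows \<tau> a b k r j) [0..<m]) = mset (map (\<lambda>r. \<tau> r j) [0..<m])"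
  proof (cases "j \<le> k")
    case True
    then have "a < m" "b < m" using assms(2,3) box_iff box_leftward_closed by blast+
    then have "image_mset (transpose a b) (mset [0..<m]) = mset [0..<m]"
      by (simp add: permutes_image_mset permutes_swap_id)
    moreover have "map (\<lambda>r. swap_rows \<tau> a b k r j) [0..<m] =
        map (\<lambda>r. \<tau> r j) (map (transpose a b) [0..<m])"
      using True by (simp add: swap_rows_le)
    ultimately show ?thesis by (simp only: mset_map image_mset.compositionality)
  qed (simp add: swap_rows_gt)
  then have "sort (map (\<lambda>r. swap_rows \<tau> a b k r j) [0..<m]) = sort (map (\<lambda>r. \<tau> r j) [0..<m])"
    by (metis sorted_list_of_multiset_mset)
  then show "st lam (swap_rows \<tau> a b k) i j = st lam \<tau> i j"
    unfolding st_def m by simp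
qed

lemma adjacent_descent_if_inversion:
  assumes "is_shape lam" "(p, q, j) \<in> inversions lam \<tau>"
  obtains a b where "box lam a j" "box lam b j" "hless lam \<tau> j a b"
    and "height lam \<tau> b j = Suc (height lam \<tau> a j)" "\<tau> b j < \<tau> a j"
proof -
  \<comment> \<open>Shrink an inversion pair along the height order until its heights are adjacent.\<close>
  have "box lam p j \<Longrightarrow> box lam q j \<Longrightarrow> \<tau> p j < \<tau> q j \<Longrightarrow> hless lam \<tau> j q p \<Longrightarrow>
    \<exists>a b. box lam a j \<and> box lam b j \<and> hless lam \<tau> j a b \<and>
      height lam \<tau> b j = Suc (height lam \<tau> a j) \<and> \<tau> b j < \<tau> a j"
  proof (induction "height lam \<tau> p j - height lam \<tau> q j" arbitrary: p q rule: less_induct)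
    case less
    show ?case
    proof (cases "\<exists>c. box lam c j \<and> hless lam \<tau> j q c \<and> hless lam \<tau> j c p")
      case False
      with height_Suc_if_nothing_between[OF assms(1) less.prems(2,4)] less.prems show ?thesis
        by blast
    next
      case True
      then obtain c where c: "box lam c j" "hless lam \<tau> j q c" "hless lam \<tau> j c p" by blast
      have "height lam \<tau> q j < height lam \<tau> c j" "height lam \<tau> c j < height lam \<tau> p j"
        using height_less[OF assms(1)] c less.prems by blast+
      then show ?thesis
        using less.hyps[of c q] less.hyps[of p c] c less.prems by (cases "\<tau> c j < \<tau> q j") auto
    qed
  qed
  with assms(2) that show thesis by (auto simp: inversions_def)
qed

lemma right_neighbour_if_hless:
  assumes "is_shape lam" "row_standard lam \<tau>" "hless lam \<tau> k a b" "box lam b (Suc k)"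
  shows "box lam a (Suc k)" "\<tau> a k < \<tau> b (Suc k)"
proof -
  show "box lam a (Suc k)"
  proof (rule ccontr)
    assume "\<not> box lam a (Suc k)"
    with assms(3) have "a < b" by (subst (asm) hless.simps) simp
    moreover have "b < a" using less_if_box_not_box[OF assms(1,4)] \<open>\<not> box lam a (Suc k)\<close> .
    ultimately show False by simp
  qed
  with assms(2-4) have "\<tau> a k < \<tau> a (Suc k)" "\<tau> a (Suc k) \<le> \<tau> b (Suc k)"
    by (auto simp: row_standard_def hless.simps[of lam \<tau> k a b])
  then show "\<tau> a k < \<tau> b (Suc k)" by simp
qed

lemma vanishes_outside_swap_rows:
  assumes "box lam a j" "box lam b j" "vanishes_outside lam \<tau>"
  shows "vanishes_outside lam (swap_rows \<tau> a b j)"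
  using assms box_leftward_closed unfolding vanishes_outside_def swap_rows_def by metis

lemma row_standard_swap_rows_descent:
  assumes "is_shape lam" "row_standard lam \<tau>" "box lam a k" "box lam b k"
    and "hless lam \<tau> k a b" "\<tau> b k < \<tau> a k"
  shows "row_standard lam (swap_rows \<tau> a b k)"
  unfolding row_standard_def
proof (intro allI impI)
  fix i j assume box: "box lam i (Suc j)"
  consider "Suc j \<le> k" | "j = k" | "k < j" by linarith
  then show "swap_rows \<tau> a b k i j < swap_rows \<tau> a b k i (Suc j)"
  proof cases
    case 1
    then have "box lam (transpose a b i) (Suc j)"
      using box box_transpose assms(3,4) box_leftward_closed by metis
    with 1 assms(2) show ?thesis by (simp add: swap_rows_le row_standard_def)
  next
    case 2
    \<comment> \<open>Row b receives the entry of a, which is below b's right neighbour because a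
      precedes b in the height order.\<close>
    have "\<tau> (transpose a b i) k < \<tau> i (Suc k)"
    proof (cases "i = a")
      case True
      with box 2 assms(2) have "\<tau> a k < \<tau> a (Suc k)" by (simp add: row_standard_def)
      with True assms(6) show ?thesis by simp
    next
      case False
      with box 2 assms(2) right_neighbour_if_hless(2)[OF assms(1,2,5)] show ?thesis
        by (cases "i = b") (simp_all add: row_standard_def)
    qed
    with 2 show ?thesis by (simp add: swap_rows_le swap_rows_gt)
  next
    case 3
    with box assms(2) show ?thesis by (simp add: swap_rows_gt row_standard_def)
  qed
qed

lemma adm_step_swap_rows_descent:
  assumes "is_shape lam" "row_standard lam \<tau>" "box lam a k" "box lam b k"
    and "hless lam \<tau> k a b" "height lam \<tau> b k = Suc (height lam \<tau> a k)" "\<tau> b k < \<tau> a k"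
  shows "adm_step lam (swap_rows \<tau> a b k) \<tau>"
proof -
  let ?\<sigma> = "swap_rows \<tau> a b k"
  have "a \<noteq> b" using assms(5) hless_irrefl by metis
  have right: "\<forall>i j. k < j \<longrightarrow> ?\<sigma> i j = \<tau> i j" by (simp add: swap_rows_gt)
  have "height lam ?\<sigma> x k = height lam \<tau> x k" for x
    using height_cong_right[OF right] .
  moreover have "?\<sigma> a k = \<tau> b k" "?\<sigma> b k = \<tau> a k" by (simp_all add: swap_rows_le)
  moreover have "box lam a (Suc k) \<Longrightarrow> \<tau> a k < \<tau> a (Suc k)"
    "box lam b (Suc k) \<Longrightarrow> \<tau> b k < \<tau> b (Suc k)"
    using assms(2) by (simp_all add: row_standard_def)
  ultimately show ?thesis
    unfolding adm_step_def using assms(3,4,6,7) \<open>a \<noteq> b\<close> right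
      right_neighbour_if_hless(2)[OF assms(1,2,5)]
    by (intro exI[of _ a] exI[of _ b] exI[of _ k]) auto
qed

lemma relpowp_adm_step_st:
  assumes "is_shape lam" "vanishes_outside lam \<tau>" "row_standard lam \<tau>"
  shows "(adm_step lam ^^ card (inversions lam \<tau>)) (st lam \<tau>) \<tau>"
proof -
  have "card (inversions lam \<tau>) = n \<Longrightarrow> (adm_step lam ^^ n) (st lam \<tau>) \<tau>" for n
    using assms(2,3)
  proof (induction n arbitrary: \<tau>)
    case 0
    then have "\<forall>j. column_sorted lam \<tau> j"
      using inversions_empty_iff_column_sorted[OF assms(1)] finite_inversions by auto
    with 0 show ?case using st_eq_self_if_column_sorted[OF assms(1)] by simp
  next
    case (Suc n)
    then have "inversions lam \<tau> \<noteq> {}" by auto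
    then obtain p q k where "(p, q, k) \<in> inversions lam \<tau>" by auto
    then obtain a b where ab: "box lam a k" "box lam b k" "hless lam \<tau> k a b"
      "height lam \<tau> b k = Suc (height lam \<tau> a k)" "\<tau> b k < \<tau> a k"
      using adjacent_descent_if_inversion[OF assms(1)] by blast
    define \<sigma> where "\<sigma> = swap_rows \<tau> a b k"
    have "card (inversions lam \<tau>) = Suc (card (inversions lam \<sigma>))"
      unfolding \<sigma>_def using card_inversions_swap_rows_descent[OF assms(1) ab] .
    moreover have "vanishes_outside lam \<sigma>" "row_standard lam \<sigma>"
      using vanishes_outside_swap_rows row_standard_swap_rows_descent Suc.prems ab assms(1)
      by (simp_all add: \<sigma>_def)
    ultimately have "(adm_step lam ^^ n) (st lam \<sigma>) \<sigma>" using Suc by simp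
    moreover have "st lam \<sigma> = st lam \<tau>" using st_swap_rows[OF assms(1) ab(1,2)] by (simp add: \<sigma>_def)
    moreover have "adm_step lam \<sigma> \<tau>"
      using adm_step_swap_rows_descent[OF assms(1) Suc.prems(3) ab] by (simp add: \<sigma>_def)
    ultimately show ?case by (metis relpowp_Suc_I)
  qed
  then show ?thesis by simp
qed

theorem mainTheorem8:
  fixes lam mu :: "nat list" and T \<tau> :: filling
  assumes "is_shape lam" and "is_content lam mu"
    and "T \<in> S_set lam mu"
    and "is_filling lam mu \<tau>" and "row_standard lam \<tau>"
    and "st lam \<tau> = T"
  shows "(adm_step lam ^^ inv_count lam \<tau>) T \<tau> \<and>
         (\<forall>n. (adm_step lam ^^ n) T \<tau> \<longrightarrow> inv_count lam \<tau> \<le> n)"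
proof (intro conjI allI impI)
  have "vanishes_outside lam \<tau>"
    using assms(4) by (simp add: is_filling_def vanishes_outside_def)
  from relpowp_adm_step_st[OF assms(1) this assms(5)] assms(6)
  show "(adm_step lam ^^ inv_count lam \<tau>) T \<tau>" by (simp add: inv_count_eq_card_inversions)
next
  fix n assume "(adm_step lam ^^ n) T \<tau>"
  then have "card (inversions lam \<tau>) \<le> card (inversions lam T) + n"
    by (rule card_inversions_relpowp_adm_step[OF assms(1)])
  moreover have "inversions lam T = {}"
    using assms(1,3) column_sorted_if_col_weak inversions_empty_iff_column_sorted
    by (simp add: S_set_def)
  ultimately show "inv_count lam \<tau> \<le> n" by (simp add: inv_count_eq_card_inversions)
qed

end
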